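(* Let $D=(-\pi/2,\pi/2)\times(-\pi/2,\pi/2)\subset\mathbb{R}^2$. Let $L$ be the space of functions $u:\overline D\to\mathbb{R}$ such that each $u$ is $C^\infty$ on some open set containing $\overline D$ and vanishes on $\partial D$. Then there exist $u,v\in L$ with $v\neq u$ and $v\neq -u$ such that $$u\,\Delta u=v\,\Delta v\quad\text{in } D.$$ In other words, for some continuous function $g$ on $\overline D$, the Dirichlet problem $$u\,\Delta u=g\ \text{in } D,\qquad u=0\ \text{on } \partial D$$ has more than two solutions in $L$.
   Context: $\Delta=\partial^2/\partial x^2+\partial^2/\partial y^2$ is the Laplacian, and $\partial D$ is the boundary of the square $D$. *)

theory Defs
  imports "HOL-Analysis.Analysis"
begin

definition sqD :: "(real \<times> real) set" where
  "sqD = {-pi/2<..<pi/2} \<times> {-pi/2<..<pi/2}"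

definition partial_x :: "(real \<times> real \<Rightarrow> real) \<Rightarrow> real \<times> real \<Rightarrow> real" where
  "partial_x f p = deriv (\<lambda>s. f (s, snd p)) (fst p)"

definition partial_y :: "(real \<times> real \<Rightarrow> real) \<Rightarrow> real \<times> real \<Rightarrow> real" where
  "partial_y f p = deriv (\<lambda>t. f (fst p, t)) (snd p)"

text \<open>Iterated partial derivative; True = d/dx, False = d/dy (applied right to left).\<close>
fun iter_partial :: "bool list \<Rightarrow> (real \<times> real \<Rightarrow> real) \<Rightarrow> real \<times> real \<Rightarrow> real" where
  "iter_partial [] f = f"
| "iter_partial (b # bs) f = (if b then partial_x else partial_y) (iter_partial bs f)"

definition smooth_on :: "(real \<times> real) set \<Rightarrow> (real \<times> real \<Rightarrow> real) \<Rightarrow> bool" where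
  "smooth_on S f \<longleftrightarrow>
     (\<forall>bs. continuous_on S (iter_partial bs f) \<and>
        (\<forall>p\<in>S. (\<lambda>s. iter_partial bs f (s, snd p)) differentiable (at (fst p)) \<and>
               (\<lambda>t. iter_partial bs f (fst p, t)) differentiable (at (snd p))))"

definition laplacian :: "(real \<times> real \<Rightarrow> real) \<Rightarrow> real \<times> real \<Rightarrow> real" where
  "laplacian u p = partial_x (partial_x u) p + partial_y (partial_y u) p"

definition in_L :: "(real \<times> real \<Rightarrow> real) \<Rightarrow> bool" where
  "in_L u \<longleftrightarrow> (\<exists>S. open S \<and> closure sqD \<subseteq> S \<and> smooth_on S u) \<and>
               (\<forall>p\<in>frontier sqD. u p = 0)"

end

theory Submission
  imports Defs
begin

text \<open>
  Take \<open>F = cos x \<cdot> A(y)\<close> and \<open>G = sin 2x \<cdot> B(y)\<close>, both vanishing on the boundary of the square,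
  and put \<open>u = F + G\<close>, \<open>v = F - G\<close>. Then \<open>u \<Delta>u - v \<Delta>v = 2 (F \<Delta>G + G \<Delta>F)\<close>, which equals
  \<open>2 cos x sin 2x (A B'' + A'' B - 5 A B)\<close>. With \<open>A(y) = exp(\<alpha> y) cos y\<close>, \<open>B(y) = exp(-\<alpha> y) cos y\<close> the
  exponentials cancel and \<open>A B'' + A'' B = 2 (\<alpha>\<^sup>2 - 1) A B\<close>, so \<open>\<alpha>\<^sup>2 = 7/2\<close> makes this vanish.
  Smoothness holds because all functions involved are finite sums of products of
  exponential-trigonometric polynomials, a class closed under partial differentiation.
\<close>

inductive exp_trig_poly :: "(real \<Rightarrow> real) \<Rightarrow> bool" where
  exp_cos: "exp_trig_poly (\<lambda>x. exp (c * x) * cos (d * x))"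
| exp_sin: "exp_trig_poly (\<lambda>x. exp (c * x) * sin (d * x))"
| add: "exp_trig_poly f \<Longrightarrow> exp_trig_poly g \<Longrightarrow> exp_trig_poly (\<lambda>x. f x + g x)"
| scale: "exp_trig_poly f \<Longrightarrow> exp_trig_poly (\<lambda>x. k * f x)"

lemma exp_trig_poly_has_derivative:
  assumes "exp_trig_poly f"
  shows "\<exists>f'. exp_trig_poly f' \<and> (\<forall>x. (f has_real_derivative f' x) (at x))"
  using assms
proof (induction rule: exp_trig_poly.induct)
  case (exp_cos c d)
  show ?case
    by (rule exI[of _ "\<lambda>x. c * (exp (c*x) * cos (d*x)) + (-d) * (exp (c*x) * sin (d*x))"])
       (intro conjI allI exp_trig_poly.intros, auto intro!: derivative_eq_intros simp: algebra_simps)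
next
  case (exp_sin c d)
  show ?case
    by (rule exI[of _ "\<lambda>x. c * (exp (c*x) * sin (d*x)) + d * (exp (c*x) * cos (d*x))"])
       (intro conjI allI exp_trig_poly.intros, auto intro!: derivative_eq_intros simp: algebra_simps)
next
  case (add f g)
  then obtain f' g' where "exp_trig_poly f'" "exp_trig_poly g'"
      "\<And>x. (f has_real_derivative f' x) (at x)" "\<And>x. (g has_real_derivative g' x) (at x)"
    by blast
  then show ?case
    by (intro exI[of _ "\<lambda>x. f' x + g' x"]) (auto intro: exp_trig_poly.add DERIV_add)
next
  case (scale f k)
  then obtain f' where "exp_trig_poly f'" "\<And>x. (f has_real_derivative f' x) (at x)"
    by blast
  then show ?case
    by (intro exI[of _ "\<lambda>x. k * f' x"]) (auto intro: exp_trig_poly.scale DERIV_cmult)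
qed

lemma exp_trig_poly_continuous: "exp_trig_poly f \<Longrightarrow> continuous_on UNIV f"
  by (meson exp_trig_poly_has_derivative DERIV_isCont continuous_at_imp_continuous_on)

inductive exp_trig_poly2 :: "(real \<times> real \<Rightarrow> real) \<Rightarrow> bool" where
  prod: "exp_trig_poly h \<Longrightarrow> exp_trig_poly k \<Longrightarrow> exp_trig_poly2 (\<lambda>p. h (fst p) * k (snd p))"
| add: "exp_trig_poly2 f \<Longrightarrow> exp_trig_poly2 g \<Longrightarrow> exp_trig_poly2 (\<lambda>p. f p + g p)"

lemma exp_trig_poly2_continuous: "exp_trig_poly2 f \<Longrightarrow> continuous_on UNIV f"
proof (induction rule: exp_trig_poly2.induct)
  case (prod h k)
  have "continuous_on UNIV (\<lambda>p::real \<times> real. h (fst p))"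
    by (rule continuous_on_compose2[OF exp_trig_poly_continuous[OF prod(1)]])
       (simp_all add: continuous_on_fst continuous_on_snd continuous_on_id)
  moreover have "continuous_on UNIV (\<lambda>p::real \<times> real. k (snd p))"
    by (rule continuous_on_compose2[OF exp_trig_poly_continuous[OF prod(2)]])
       (simp_all add: continuous_on_fst continuous_on_snd continuous_on_id)
  ultimately show ?case
    by (rule continuous_on_mult)
qed (rule continuous_on_add)

lemma exp_trig_poly2_has_partial_derivatives:
  assumes "exp_trig_poly2 f"
  shows "\<exists>fx fy. exp_trig_poly2 fx \<and> exp_trig_poly2 fy \<and>
           (\<forall>x y. ((\<lambda>s. f (s, y)) has_real_derivative fx (x, y)) (at x)) \<and>
           (\<forall>x y. ((\<lambda>t. f (x, t)) has_real_derivative fy (x, y)) (at y))"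
  using assms
proof (induction rule: exp_trig_poly2.induct)
  case (prod h k)
  obtain h' where "exp_trig_poly h'" "\<And>x. (h has_real_derivative h' x) (at x)"
    using prod exp_trig_poly_has_derivative by blast
  moreover obtain k' where "exp_trig_poly k'" "\<And>y. (k has_real_derivative k' y) (at y)"
    using prod exp_trig_poly_has_derivative by blast
  ultimately show ?case
    by (intro exI[of _ "\<lambda>p. h' (fst p) * k (snd p)"] exI[of _ "\<lambda>p. h (fst p) * k' (snd p)"])
       (auto intro!: exp_trig_poly2.prod prod derivative_eq_intros)
next
  case (add f g)
  then obtain fx fy gx gy where
      "exp_trig_poly2 fx" "exp_trig_poly2 fy" "exp_trig_poly2 gx" "exp_trig_poly2 gy"
      "\<And>x y. ((\<lambda>s. f (s, y)) has_real_derivative fx (x, y)) (at x)"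
      "\<And>x y. ((\<lambda>t. f (x, t)) has_real_derivative fy (x, y)) (at y)"
      "\<And>x y. ((\<lambda>s. g (s, y)) has_real_derivative gx (x, y)) (at x)"
      "\<And>x y. ((\<lambda>t. g (x, t)) has_real_derivative gy (x, y)) (at y)"
    by blast
  then show ?case
    by (intro exI[of _ "\<lambda>p. fx p + gx p"] exI[of _ "\<lambda>p. fy p + gy p"])
       (auto intro!: exp_trig_poly2.add DERIV_add)
qed

lemma exp_trig_poly2_partial:
  assumes "exp_trig_poly2 f"
  shows "exp_trig_poly2 (partial_x f)" "exp_trig_poly2 (partial_y f)"
    and "(\<lambda>s. f (s, y)) differentiable (at x)" "(\<lambda>t. f (x, t)) differentiable (at y)"
proof -
  obtain fx fy where "exp_trig_poly2 fx" "exp_trig_poly2 fy"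
      and dx: "\<And>x y. ((\<lambda>s. f (s, y)) has_real_derivative fx (x, y)) (at x)"
      and dy: "\<And>x y. ((\<lambda>t. f (x, t)) has_real_derivative fy (x, y)) (at y)"
    using exp_trig_poly2_has_partial_derivatives[OF assms] by blast
  moreover have "partial_x f = fx" "partial_y f = fy"
    by (auto simp: partial_x_def partial_y_def intro!: ext DERIV_imp_deriv dx dy)
  ultimately show "exp_trig_poly2 (partial_x f)" "exp_trig_poly2 (partial_y f)"
    by simp_all
  show "(\<lambda>s. f (s, y)) differentiable (at x)" "(\<lambda>t. f (x, t)) differentiable (at y)"
    using dx dy unfolding real_differentiable_def by blast+
qed

lemma exp_trig_poly2_iter_partial: "exp_trig_poly2 f \<Longrightarrow> exp_trig_poly2 (iter_partial bs f)"
  by (induction bs) (auto intro: exp_trig_poly2_partial)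

lemma exp_trig_poly2_smooth_on: "exp_trig_poly2 f \<Longrightarrow> smooth_on UNIV f"
  unfolding smooth_on_def
  by (metis exp_trig_poly2_iter_partial exp_trig_poly2_continuous exp_trig_poly2_partial(3,4))

lemma partial_x_separable_sum:
  assumes "\<And>x. (h has_real_derivative h' x) (at x)" "\<And>x. (r has_real_derivative r' x) (at x)"
  shows "partial_x (\<lambda>p. h (fst p) * k (snd p) + r (fst p) * s (snd p)) =
         (\<lambda>p. h' (fst p) * k (snd p) + r' (fst p) * s (snd p))"
  unfolding partial_x_def using assms by (auto intro!: ext DERIV_imp_deriv derivative_eq_intros)

lemma partial_y_separable_sum:
  assumes "\<And>y. (k has_real_derivative k' y) (at y)" "\<And>y. (s has_real_derivative s' y) (at y)"
  shows "partial_y (\<lambda>p. h (fst p) * k (snd p) + r (fst p) * s (snd p)) =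
         (\<lambda>p. h (fst p) * k' (snd p) + r (fst p) * s' (snd p))"
  unfolding partial_y_def using assms by (auto intro!: ext DERIV_imp_deriv derivative_eq_intros)

lemma laplacian_separable_sum:
  assumes "\<And>x. (h has_real_derivative h' x) (at x)" "\<And>x. (h' has_real_derivative h'' x) (at x)"
      and "\<And>y. (k has_real_derivative k' y) (at y)" "\<And>y. (k' has_real_derivative k'' y) (at y)"
      and "\<And>x. (r has_real_derivative r' x) (at x)" "\<And>x. (r' has_real_derivative r'' x) (at x)"
      and "\<And>y. (s has_real_derivative s' y) (at y)" "\<And>y. (s' has_real_derivative s'' y) (at y)"
  shows "laplacian (\<lambda>p. h (fst p) * k (snd p) + r (fst p) * s (snd p)) (x, y) =
         h'' x * k y + h x * k'' y + r'' x * s y + r x * s'' y"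
  by (simp add: laplacian_def partial_x_separable_sum[OF assms(1,5)]
      partial_x_separable_sum[OF assms(2,6)] partial_y_separable_sum[OF assms(3,7)]
      partial_y_separable_sum[OF assms(4,8)])

definition exp_cos :: "real \<Rightarrow> real \<Rightarrow> real" where
  "exp_cos c y = exp (c * y) * cos y"

definition exp_cos' :: "real \<Rightarrow> real \<Rightarrow> real" where
  "exp_cos' c y = exp (c * y) * (c * cos y - sin y)"

definition exp_cos'' :: "real \<Rightarrow> real \<Rightarrow> real" where
  "exp_cos'' c y = exp (c * y) * ((c\<^sup>2 - 1) * cos y - 2 * c * sin y)"

lemma has_real_derivative_exp_cos: "(exp_cos c has_real_derivative exp_cos' c y) (at y)"
  unfolding exp_cos_def exp_cos'_def
  by (auto intro!: derivative_eq_intros simp: algebra_simps)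

lemma has_real_derivative_exp_cos': "(exp_cos' c has_real_derivative exp_cos'' c y) (at y)"
  unfolding exp_cos'_def exp_cos''_def
  by (auto intro!: derivative_eq_intros simp: algebra_simps power2_eq_square)

lemma exp_trig_poly_exp_cos: "exp_trig_poly (exp_cos c)"
  using exp_trig_poly.exp_cos[of c 1] by (simp add: exp_cos_def[abs_def])

lemma exp_cos_mult_exp_cos''_neg:
  "exp_cos c y * exp_cos'' (-c) y + exp_cos'' c y * exp_cos (-c) y =
   2 * (c\<^sup>2 - 1) * exp_cos c y * exp_cos (-c) y"
proof -
  have "exp (c * y) * exp (- c * y) = 1"
    by (simp add: exp_minus[symmetric] mult_exp_exp)
  then show ?thesis
    unfolding exp_cos_def exp_cos''_def by (simp add: algebra_simps)
qed

definition witness :: "real \<Rightarrow> real \<Rightarrow> real \<times> real \<Rightarrow> real" where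
  "witness c \<sigma> p = cos (fst p) * exp_cos c (snd p) + \<sigma> * sin (2 * fst p) * exp_cos (-c) (snd p)"

lemma laplacian_witness:
  "laplacian (witness c \<sigma>) (x, y) =
   cos x * (exp_cos'' c y - exp_cos c y) + \<sigma> * sin (2 * x) * (exp_cos'' (-c) y - 4 * exp_cos (-c) y)"
proof -
  have "laplacian (witness c \<sigma>) (x, y) =
        - cos x * exp_cos c y + cos x * exp_cos'' c y +
        - 4 * \<sigma> * sin (2 * x) * exp_cos (-c) y + \<sigma> * sin (2 * x) * exp_cos'' (-c) y"
    unfolding witness_def[abs_def]
    by (rule laplacian_separable_sum)
       (auto intro!: derivative_eq_intros has_real_derivative_exp_cos has_real_derivative_exp_cos')
  then show ?thesis
    by (simp add: algebra_simps)
qed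

lemma witness_mult_laplacian_witness:
  assumes "c\<^sup>2 = 7/2"
  shows "witness c 1 p * laplacian (witness c 1) p = witness c (-1) p * laplacian (witness c (-1)) p"
proof -
  obtain x y where p: "p = (x, y)" by fastforce
  have "exp_cos c y * exp_cos'' (-c) y + exp_cos'' c y * exp_cos (-c) y =
        5 * exp_cos c y * exp_cos (-c) y"
    using exp_cos_mult_exp_cos''_neg[of c y] assms by simp
  then show ?thesis
    unfolding p laplacian_witness witness_def fst_conv snd_conv by algebra
qed

lemma closure_sqD: "closure sqD = {-pi/2..pi/2} \<times> {-pi/2..pi/2}"
  by (simp add: sqD_def closure_Times)

lemma cos_eq_0_on_frontier_sqD:
  assumes "p \<in> frontier sqD"
  shows "cos (fst p) = 0 \<or> cos (snd p) = 0"
proof -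
  have "interior sqD = sqD"
    by (simp add: sqD_def interior_open open_Times)
  then have "fst p \<in> {-pi/2, pi/2} \<or> snd p \<in> {-pi/2, pi/2}"
    using assms unfolding frontier_def closure_sqD by (cases p) (auto simp: sqD_def)
  moreover have "cos (-pi/2) = 0" "cos (pi/2) = 0"
    by (simp_all add: minus_divide_left[symmetric])
  ultimately show ?thesis
    by (metis empty_iff insert_iff)
qed

lemma in_L_witness: "in_L (witness c \<sigma>)"
proof -
  have "exp_trig_poly2 (witness c \<sigma>)"
    unfolding witness_def[abs_def]
    using exp_trig_poly.exp_cos[of 0 1] exp_trig_poly.scale[OF exp_trig_poly.exp_sin[of 0 2], of \<sigma>]
    by (intro exp_trig_poly2.intros exp_trig_poly_exp_cos) (simp_all add: mult.assoc)
  moreover have "witness c \<sigma> p = 0" if "p \<in> frontier sqD" for p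
    using cos_eq_0_on_frontier_sqD[OF that] by (auto simp: witness_def exp_cos_def sin_double)
  ultimately show ?thesis
    unfolding in_L_def using exp_trig_poly2_smooth_on by blast
qed

theorem theorem4:
  shows "\<exists>u v. in_L u \<and> in_L v \<and>
           (\<exists>p\<in>closure sqD. v p \<noteq> u p) \<and> (\<exists>p\<in>closure sqD. v p \<noteq> - u p) \<and>
           (\<forall>p\<in>sqD. u p * laplacian u p = v p * laplacian v p)"
proof -
  define c where "c = sqrt (7/2)"
  have "(pi/4, 0) \<in> closure sqD" "(0, 0) \<in> closure sqD"
    using pi_gt_zero by (auto simp: closure_sqD)
  moreover have "witness c (-1) (pi/4, 0) \<noteq> witness c 1 (pi/4, 0)"
    by (simp add: witness_def exp_cos_def)
  moreover have "witness c (-1) (0, 0) \<noteq> - witness c 1 (0, 0)"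
    by (simp add: witness_def exp_cos_def)
  moreover have "c\<^sup>2 = 7/2"
    by (simp add: c_def)
  ultimately show ?thesis
    using in_L_witness witness_mult_laplacian_witness by blast
qed

end
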